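(* Let $\tau>0$. The function $$x\mapsto\Bigl(\sum_{n=-\infty}^\infty\operatorname{sech}\pi\bigl(\tfrac{2\pi}\tau n+x\bigr)\Bigr)^2-\Bigl(\sum_{n=-\infty}^\infty(-1)^n\operatorname{sech}\pi\bigl(\tfrac{2\pi}\tau n+x\bigr)\Bigr)^2$$ is constant on $\mathbb R$. *)

theory Defs
  imports "HOL-Analysis.Analysis"
begin

definition sech :: "real \<Rightarrow> real" where
  "sech x = 1 / cosh x"

end

theory Submission
  imports Defs
begin

(* Split S(x) = sum_n sech (a n + y) into its even- and odd-indexed parts E and O; the alternating
   sum is then E - O, so the difference of squares is 4 E O.  Since
   sech A sech B = (tanh A - tanh B) / sinh (A - B), grouping the double series E O along the
   diagonals m - n = k turns each diagonal into a telescoping tanh series, with value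
   (2 k + D) / sinh (a (2 k - 1)) for a constant D depending on y only.  Pairing the diagonals k and
   1 - k, whose denominators differ by a sign, eliminates D and leaves
   E O = sum_k (2 k - 1) / sinh (a (2 k - 1)), which does not depend on y. *)

lemma has_sum_complementary_ranges:
  fixes f :: "'a \<Rightarrow> 'c::topological_comm_monoid_add"
  assumes "inj g" "inj h" "range g \<inter> range h = {}" "range g \<union> range h = UNIV"
    and "((f \<circ> g) has_sum a) UNIV" "((f \<circ> h) has_sum b) UNIV"
  shows "(f has_sum (a + b)) UNIV"
proof -
  have "(f has_sum a) (range g)" "(f has_sum b) (range h)"
    using assms by (simp_all add: has_sum_reindex)
  then have "(f has_sum (a + b)) (range g \<union> range h)"
    using assms(3) by (rule has_sum_Un_disjoint)
  with assms(4) show ?thesis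
    by simp
qed

lemma has_sum_int_nonneg_neg:
  fixes f :: "int \<Rightarrow> 'a::topological_comm_monoid_add"
  assumes "((\<lambda>n. f (int n)) has_sum a) UNIV" "((\<lambda>n. f (- int n - 1)) has_sum b) UNIV"
  shows "(f has_sum (a + b)) UNIV"
proof (rule has_sum_complementary_ranges[of int "\<lambda>n. - int n - 1"])
  have "x \<in> range int \<union> range (\<lambda>n. - int n - 1)" for x :: int
  proof (cases "x \<ge> 0")
    case True
    then have "x = int (nat x)" by simp
    then show ?thesis by blast
  next
    case False
    then have "x = - int (nat (- x - 1)) - 1" by simp
    then show ?thesis by blast
  qed
  then show "range int \<union> range (\<lambda>n. - int n - 1) = UNIV"
    by blast
qed (use assms in \<open>auto simp: inj_def o_def\<close>)

lemma has_sum_int_even_odd: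
  fixes f :: "int \<Rightarrow> 'a::topological_comm_monoid_add"
  assumes "((\<lambda>m. f (2 * m)) has_sum a) UNIV" "((\<lambda>m. f (2 * m + 1)) has_sum b) UNIV"
  shows "(f has_sum (a + b)) UNIV"
proof (rule has_sum_complementary_ranges[of "\<lambda>m. 2 * m" "\<lambda>m. 2 * m + 1"])
  have "x \<in> range (\<lambda>m. 2 * m) \<union> range (\<lambda>m. 2 * m + 1)" for x :: int
  proof (cases "even x")
    case True
    then have "x = 2 * (x div 2)" by simp
    then show ?thesis by blast
  next
    case False
    then have "x = 2 * (x div 2) + 1" by simp
    then show ?thesis by blast
  qed
  then show "range (\<lambda>m::int. 2 * m) \<union> range (\<lambda>m. 2 * m + 1) = UNIV"
    by blast
  show "range (\<lambda>m::int. 2 * m) \<inter> range (\<lambda>m. 2 * m + 1) = {}"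
    by (auto dest: arg_cong[where f = even])
qed (use assms in \<open>auto simp: inj_def o_def\<close>)

lemma has_sum_int_shift_iff:
  fixes g :: "int \<Rightarrow> 'a::topological_comm_monoid_add"
  shows "((\<lambda>n. g (n + d)) has_sum s) UNIV \<longleftrightarrow> (g has_sum s) UNIV"
  by (rule has_sum_reindex_bij_witness[of _ "\<lambda>n. n - d" "\<lambda>n. n + d"]) auto

lemma has_sum_int_reflect_iff:
  fixes g :: "int \<Rightarrow> 'a::topological_comm_monoid_add"
  shows "((\<lambda>k. g (r - k)) has_sum s) UNIV \<longleftrightarrow> (g has_sum s) UNIV"
  by (rule has_sum_reindex_bij_witness[of _ "\<lambda>k. r - k" "\<lambda>k. r - k"]) auto

lemma has_sum_product_nonneg:
  fixes f :: "'a \<Rightarrow> real" and g :: "'b \<Rightarrow> real"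
  assumes "\<And>x. f x \<ge> 0" "\<And>y. g y \<ge> 0" "(f has_sum s) UNIV" "(g has_sum t) UNIV"
  shows "((\<lambda>(x, y). f x * g y) has_sum (s * t)) UNIV"
proof -
  have rows: "((\<lambda>y. f x * g y) has_sum (f x * t)) UNIV" for x
    using assms(4) by (rule has_sum_cmult_right)
  have cols: "((\<lambda>x. f x * t) has_sum (s * t)) UNIV"
    using assms(3) by (rule has_sum_cmult_left)
  have "(\<lambda>(x, y). f x * g y) summable_on UNIV \<times> UNIV"
    using rows cols assms(1,2) by (intro summable_on_SigmaI) (auto simp: has_sum_imp_summable)
  then have "((\<lambda>(x, y). f x * g y) has_sum (s * t)) (UNIV \<times> UNIV)"
    using rows cols by (intro has_sum_SigmaI) auto
  then show ?thesis
    by simp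
qed

lemma has_sum_int_telescope:
  fixes f :: "int \<Rightarrow> real"
  assumes "mono f" "(f \<longlongrightarrow> L) at_top" "(f \<longlongrightarrow> M) at_bot"
  shows "((\<lambda>n. f (n + 1) - f n) has_sum (L - M)) UNIV"
proof -
  have step_nonneg: "0 \<le> f (n + 1) - f n" for n
    using assms(1) by (simp add: monoD)
  have "(\<lambda>n. f (int n)) \<longlonglongrightarrow> L"
    using assms(2) filterlim_int_sequentially by (rule filterlim_compose)
  from telescope_sums[OF this] have "(\<lambda>n. f (int n + 1) - f (int n)) sums (L - f 0)"
    by (simp add: add.commute)
  then have up: "((\<lambda>n. f (int n + 1) - f (int n)) has_sum (L - f 0)) UNIV"
    by (rule sums_nonneg_imp_has_sum) (rule step_nonneg)
  have "filterlim (\<lambda>n. - int n) at_bot sequentially"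
    by (rule filterlim_compose[OF _ filterlim_int_sequentially]) (simp add: filterlim_def at_bot_mirror)
  with assms(3) have "(\<lambda>n. f (- int n)) \<longlonglongrightarrow> M"
    by (rule filterlim_compose)
  from telescope_sums'[OF this] have "(\<lambda>n. f (- int n) - f (- int (Suc n))) sums (f 0 - M)"
    by simp
  moreover have "- int (Suc n) = - int n - 1" for n
    by simp
  ultimately have "(\<lambda>n. f (- int n - 1 + 1) - f (- int n - 1)) sums (f 0 - M)"
    by (simp only: diff_add_cancel)
  then have down: "((\<lambda>n. f (- int n - 1 + 1) - f (- int n - 1)) has_sum (f 0 - M)) UNIV"
    by (rule sums_nonneg_imp_has_sum) (rule step_nonneg)
  show ?thesis
    using has_sum_int_nonneg_neg[OF up down] by simp
qed

lemma has_sum_int_telescope_shift: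
  fixes f :: "int \<Rightarrow> real"
  assumes "mono f" "(f \<longlongrightarrow> L) at_top" "(f \<longlongrightarrow> M) at_bot"
  shows "((\<lambda>n. f (n + k) - f n) has_sum (of_int k * (L - M))) UNIV"
proof -
  have forward: "((\<lambda>n. f (n + int j) - f n) has_sum (of_nat j * (L - M))) UNIV" for j
  proof (induction j)
    case 0
    then show ?case by simp
  next
    case (Suc j)
    have "((\<lambda>n. f (n + 1 + int j) - f (n + 1)) has_sum (of_nat j * (L - M))) UNIV"
      using Suc.IH has_sum_int_shift_iff[where g = "\<lambda>n. f (n + int j) - f n" and d = 1]
      by (simp add: algebra_simps)
    from has_sum_add[OF this has_sum_int_telescope[OF assms]] show ?case
      by (simp add: algebra_simps)
  qed
  show ?thesis
  proof (cases "k \<ge> 0")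
    case True
    then obtain j where "k = int j"
      by (intro that[of "nat k"]) simp
    with forward show ?thesis by simp
  next
    case False
    then obtain j where j: "k = - int j"
      by (intro that[of "nat (- k)"]) simp
    have "((\<lambda>n. f (n - int j) - f n) has_sum - (of_nat j * (L - M))) UNIV"
      using has_sum_uminusI[OF forward[of j]]
        has_sum_int_shift_iff[where g = "\<lambda>n. - (f (n + int j) - f n)" and d = "- int j"]
      by simp
    with j show ?thesis by simp
  qed
qed

lemma sech_pos: "0 < sech x"
  by (simp add: sech_def)

lemma sech_le_1: "sech x \<le> 1"
  by (simp add: sech_def cosh_real_ge_1)

lemma sech_le_exp_abs: "sech x \<le> 2 * exp (- \<bar>x\<bar>)"
proof -
  have "exp \<bar>x\<bar> / 2 \<le> cosh x"
    by (cases "x \<ge> 0") (simp_all add: cosh_def)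
  then have "1 / cosh x \<le> 1 / (exp \<bar>x\<bar> / 2)"
    by (intro divide_left_mono) auto
  then show ?thesis
    by (simp add: sech_def exp_minus field_simps)
qed

lemma tanh_diff_eq: "tanh x - tanh y = sinh (x - y) * sech x * sech y"
  by (simp add: tanh_def sech_def sinh_diff field_simps)

lemma filterlim_affine_of_int:
  fixes c y :: real
  assumes "c > 0"
  shows "filterlim (\<lambda>n::int. c * of_int n + y) at_top at_top"
    and "filterlim (\<lambda>n::int. c * of_int n + y) at_bot at_bot"
proof -
  show "filterlim (\<lambda>n::int. c * of_int n + y) at_top at_top"
    using filterlim_tendsto_add_at_top[OF tendsto_const
        filterlim_tendsto_pos_mult_at_top[OF tendsto_const assms filterlim_real_of_int_at_top]]
    by (simp add: add.commute)
  show "filterlim (\<lambda>n::int. c * of_int n + y) at_bot at_bot"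
    using filterlim_tendsto_add_at_bot_iff[OF tendsto_const, THEN iffD2,
        OF filterlim_tendsto_pos_mult_at_bot[OF tendsto_const assms filterlim_real_of_int_at_bot]]
    by (simp add: add.commute)
qed

lemma tanh_lattice_telescope:
  fixes c y :: real
  assumes "c > 0"
  shows "((\<lambda>n::int. tanh (c * of_int (n + k) + y) - tanh (c * of_int n + y)) has_sum (2 * of_int k)) UNIV"
proof -
  let ?f = "\<lambda>n::int. tanh (c * of_int n + y)"
  have "mono ?f"
    using assms by (intro monoI) (simp add: tanh_real_le_iff)
  moreover have "(?f \<longlongrightarrow> 1) at_top"
    using tanh_real_at_top filterlim_affine_of_int(1)[OF assms] by (rule filterlim_compose)
  moreover have "(?f \<longlongrightarrow> -1) at_bot"
    using tanh_real_at_bot filterlim_affine_of_int(2)[OF assms] by (rule filterlim_compose)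
  ultimately show ?thesis
    using has_sum_int_telescope_shift[of ?f 1 "-1" k] by (simp add: mult.commute)
qed

lemma sech_lattice_summable:
  fixes c y :: real
  assumes "c > 0"
  shows "(\<lambda>n::int. sech (c * of_int n + y)) summable_on UNIV"
proof -
  define q where "q = exp (- c)"
  have q: "0 < q" "q < 1"
    using assms by (simp_all add: q_def)
  have "((\<lambda>n. q ^ nat \<bar>int n\<bar>) has_sum (1 / (1 - q))) UNIV"
    using q geometric_sums[of q] by (intro sums_nonneg_imp_has_sum) simp_all
  moreover have "((\<lambda>n. q ^ nat \<bar>- int n - 1\<bar>) has_sum (q / (1 - q))) UNIV"
    using q sums_mult[OF geometric_sums, of q q] by (intro sums_nonneg_imp_has_sum) (simp_all add: nat_add_distrib)
  ultimately have "(\<lambda>n::int. q ^ nat \<bar>n\<bar>) summable_on UNIV"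
    by (blast intro: has_sum_imp_summable has_sum_int_nonneg_neg)
  then have "(\<lambda>n::int. 2 * exp \<bar>y\<bar> * q ^ nat \<bar>n\<bar>) summable_on UNIV"
    by (rule summable_on_cmult_right)
  then show ?thesis
  proof (rule summable_on_comparison_test)
    fix n :: int
    have "c * \<bar>of_int n\<bar> - \<bar>y\<bar> \<le> \<bar>c * of_int n + y\<bar>"
      using assms by (auto simp: abs_mult)
    then have "exp (- \<bar>c * of_int n + y\<bar>) \<le> exp \<bar>y\<bar> * exp (real (nat \<bar>n\<bar>) * (- c))"
      by (simp add: exp_add[symmetric] algebra_simps)
    also have "exp (real (nat \<bar>n\<bar>) * (- c)) = q ^ nat \<bar>n\<bar>"
      by (simp add: q_def flip: exp_of_nat_mult)
    finally show "sech (c * of_int n + y) \<le> 2 * exp \<bar>y\<bar> * q ^ nat \<bar>n\<bar>"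
      using sech_le_exp_abs[of "c * of_int n + y"] by linarith
  qed (simp add: less_imp_le sech_pos)
qed

lemma tanh_lattice_diff_summable:
  fixes c s t :: real
  assumes "c > 0"
  shows "(\<lambda>n::int. tanh (c * of_int n + s) - tanh (c * of_int n + t)) summable_on UNIV"
proof -
  have "(\<lambda>n::int. \<bar>sinh (s - t)\<bar> * sech (c * of_int n + s)) summable_on UNIV"
    using sech_lattice_summable[OF assms] by (rule summable_on_cmult_right)
  then have "(\<lambda>n::int. norm (tanh (c * of_int n + s) - tanh (c * of_int n + t))) summable_on UNIV"
  proof (rule Infinite_Sum.abs_summable_on_comparison_test')
    fix n :: int
    have "norm (tanh (c * of_int n + s) - tanh (c * of_int n + t))
        = \<bar>sinh (s - t)\<bar> * sech (c * of_int n + s) * sech (c * of_int n + t)"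
      by (simp add: tanh_diff_eq abs_mult abs_of_pos[OF sech_pos])
    also have "\<dots> \<le> \<bar>sinh (s - t)\<bar> * sech (c * of_int n + s)"
      using sech_le_1 sech_pos by (intro mult_left_le) (simp_all add: less_imp_le)
    finally show "norm (tanh (c * of_int n + s) - tanh (c * of_int n + t))
        \<le> \<bar>sinh (s - t)\<bar> * sech (c * of_int n + s)" .
  qed
  then show ?thesis
    by (rule summable_on_iff_abs_summable_on_real[THEN iffD2])
qed

lemma sech_sublattice_row_has_sum:
  fixes a y D :: real and k :: int
  assumes "a > 0"
    and D: "((\<lambda>n::int. tanh (2 * a * of_int n + y) - tanh (2 * a * of_int n + (a + y))) has_sum D) UNIV"
  shows "((\<lambda>n::int. sech (2 * a * of_int (n + k) + y) * sech (2 * a * of_int n + (a + y)))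
           has_sum ((2 * of_int k + D) / sinh (a * (2 * of_int k - 1)))) UNIV"
proof -
  have "2 * a > 0"
    using assms by simp
  from has_sum_add[OF tanh_lattice_telescope[OF this, of k y] D]
  have "((\<lambda>n::int. tanh (2 * a * of_int (n + k) + y) - tanh (2 * a * of_int n + (a + y)))
          has_sum (2 * of_int k + D)) UNIV"
    by simp
  moreover have "(2 * a * of_int (n + k) + y) - (2 * a * of_int n + (a + y)) = a * (2 * of_int k - 1)"
    for n :: int
    by (simp add: algebra_simps)
  ultimately have "((\<lambda>n::int. sinh (a * (2 * of_int k - 1))
        * (sech (2 * a * of_int (n + k) + y) * sech (2 * a * of_int n + (a + y))))
          has_sum (2 * of_int k + D)) UNIV"
    by (simp add: tanh_diff_eq mult.assoc)
  moreover have "sinh (a * (2 * of_int k - 1)) \<noteq> 0"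
  proof
    assume "sinh (a * (2 * of_int k - 1)) = 0"
    then have "2 * k = 1"
      using assms by simp
    then show False
      by presburger
  qed
  ultimately show ?thesis
    using has_sum_divide_const[where c = "sinh (a * (2 * of_int k - 1))"] by fastforce
qed

lemma sech_sublattice_product:
  fixes a y :: real
  assumes "a > 0"
  shows "(\<Sum>\<^sub>\<infinity>m::int. sech (2 * a * of_int m + y)) * (\<Sum>\<^sub>\<infinity>n::int. sech (2 * a * of_int n + (a + y)))
    = (\<Sum>\<^sub>\<infinity>k::int. (2 * of_int k - 1) / sinh (a * (2 * of_int k - 1)))"
    (is "?E * ?O = _")
proof -
  have "2 * a > 0"
    using assms by simp
  have "((\<lambda>(m, n). sech (2 * a * of_int m + y) * sech (2 * a * of_int n + (a + y))) has_sum ?E * ?O) UNIV"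
    using sech_lattice_summable[OF \<open>2 * a > 0\<close>]
    by (intro has_sum_product_nonneg has_sum_infsum) (simp_all add: less_imp_le sech_pos)
  also have "?this \<longleftrightarrow>
      ((\<lambda>(k, n). sech (2 * a * of_int (n + k) + y) * sech (2 * a * of_int n + (a + y))) has_sum ?E * ?O) UNIV"
    by (rule has_sum_reindex_bij_witness[of _ "\<lambda>(k, n). (n + k, n)" "\<lambda>(m, n). (m - n, n)"]) auto
  finally have pairs: "((\<lambda>(k, n). sech (2 * a * of_int (n + k) + y) * sech (2 * a * of_int n + (a + y)))
      has_sum ?E * ?O) (UNIV \<times> UNIV)"
    by simp
  define D where "D = (\<Sum>\<^sub>\<infinity>n::int. tanh (2 * a * of_int n + y) - tanh (2 * a * of_int n + (a + y)))"
  have "((\<lambda>n::int. tanh (2 * a * of_int n + y) - tanh (2 * a * of_int n + (a + y))) has_sum D) UNIV"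
    unfolding D_def using tanh_lattice_diff_summable[OF \<open>2 * a > 0\<close>] by (rule has_sum_infsum)
  from sech_sublattice_row_has_sum[OF assms this]
  have rows: "((\<lambda>k. (2 * of_int k + D) / sinh (a * (2 * of_int k - 1))) has_sum ?E * ?O) UNIV"
    by (intro has_sum_Sigma'[OF pairs]) simp
  \<comment> \<open>D is never computed: it cancels between the diagonals k and 1 - k.\<close>
  then have "((\<lambda>k. (2 * of_int (1 - k) + D) / sinh (a * (2 * of_int (1 - k) - 1))) has_sum ?E * ?O) UNIV"
    by (subst has_sum_int_reflect_iff[where r = 1 and g = "\<lambda>k. (2 * of_int k + D) / sinh (a * (2 * of_int k - 1))"])
  from has_sum_divide_const[OF has_sum_add[OF rows this], of 2]
  have "((\<lambda>k. ((2 * of_int k + D) / sinh (a * (2 * of_int k - 1))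
      + (2 * of_int (1 - k) + D) / sinh (a * (2 * of_int (1 - k) - 1))) / 2) has_sum ?E * ?O) UNIV"
    by simp
  moreover have "((2 * of_int k + D) / sinh (a * (2 * of_int k - 1))
      + (2 * of_int (1 - k) + D) / sinh (a * (2 * of_int (1 - k) - 1))) / 2
      = (2 * of_int k - 1) / sinh (a * (2 * of_int k - 1))" for k :: int
  proof -
    have "a * (2 * of_int (1 - k) - 1) = - (a * (2 * of_int k - 1))"
      by (simp add: algebra_simps)
    then have sinh_reflect: "sinh (a * (2 * of_int (1 - k) - 1)) = - sinh (a * (2 * of_int k - 1))"
      by (simp only: sinh_minus)
    have "((2 * x + D) / s + (2 * (1 - x) + D) / (- s)) / 2 = (2 * x - 1) / s" for x s :: real
      by (cases "s = 0") (simp_all add: field_simps)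
    then show ?thesis
      unfolding sinh_reflect unfolding of_int_diff of_int_1 .
  qed
  ultimately have "((\<lambda>k. (2 * of_int k - 1) / sinh (a * (2 * of_int k - 1))) has_sum ?E * ?O) UNIV"
    by (simp only:)
  then show ?thesis
    by (rule infsumI[symmetric])
qed

lemma sech_lattice_squares_diff:
  fixes a y :: real
  assumes "a > 0"
  shows "(\<Sum>\<^sub>\<infinity>n::int. sech (a * of_int n + y))\<^sup>2
      - (\<Sum>\<^sub>\<infinity>n::int. (-1) powi n * sech (a * of_int n + y))\<^sup>2
    = 4 * (\<Sum>\<^sub>\<infinity>k::int. (2 * of_int k - 1) / sinh (a * (2 * of_int k - 1)))"
proof -
  let ?E = "\<Sum>\<^sub>\<infinity>m::int. sech (2 * a * of_int m + y)"
  let ?O = "\<Sum>\<^sub>\<infinity>m::int. sech (2 * a * of_int m + (a + y))"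
  have "2 * a > 0"
    using assms by simp
  have E: "((\<lambda>m. sech (2 * a * of_int m + y)) has_sum ?E) UNIV"
    and O: "((\<lambda>m. sech (2 * a * of_int m + (a + y))) has_sum ?O) UNIV"
    using sech_lattice_summable[OF \<open>2 * a > 0\<close>] by (blast intro: has_sum_infsum)+
  have "((\<lambda>n. sech (a * of_int n + y)) has_sum ?E + ?O) UNIV"
    by (rule has_sum_int_even_odd) (use E O in \<open>simp_all add: algebra_simps\<close>)
  moreover have "((\<lambda>n. (-1) powi n * sech (a * of_int n + y)) has_sum ?E + - ?O) UNIV"
    by (rule has_sum_int_even_odd) (use E has_sum_uminusI[OF O] in \<open>simp_all add: algebra_simps\<close>)
  ultimately have "(\<Sum>\<^sub>\<infinity>n::int. sech (a * of_int n + y))\<^sup>2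
      - (\<Sum>\<^sub>\<infinity>n::int. (-1) powi n * sech (a * of_int n + y))\<^sup>2 = 4 * (?E * ?O)"
    by (simp add: infsumI power2_eq_square algebra_simps)
  then show ?thesis
    using sech_sublattice_product[OF assms, of y] by simp
qed

theorem lemmaB1:
  fixes \<tau> :: real
  assumes "\<tau> > 0"
  shows "\<exists>c. \<forall>x::real.
    (\<Sum>\<^sub>\<infinity>n::int. sech (pi * (2 * pi / \<tau> * of_int n + x)))\<^sup>2
    - (\<Sum>\<^sub>\<infinity>n::int. (-1) powi n * sech (pi * (2 * pi / \<tau> * of_int n + x)))\<^sup>2 = c"
proof -
  define a where "a = pi * (2 * pi / \<tau>)"
  have "a > 0"
    using assms by (simp add: a_def)
  have "pi * (2 * pi / \<tau> * of_int n + x) = a * of_int n + pi * x" for n :: int and x :: real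
    by (simp add: a_def algebra_simps)
  then show ?thesis
    by (simp only: sech_lattice_squares_diff[OF \<open>a > 0\<close>]) blast
qed

end
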